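(* Let $p\ge3$ be prime, $d,R\in\mathbb{Q}$, $d\ne0$, $R$ not a square, $D=d^2-R$. If $f_p=f_p(Z,d,R)$ has no zero in $\mathbb{Q}$, then $f_p$ is irreducible in $\mathbb{Q}[Z]$.
   Context: $f_p(Z,d,R)=\sum_{j=0}^{(p-1)/2}(-1)^j\frac{p}{p-j}\binom{p-j}{j}D^jZ^{p-2j}-2dD^{(p-1)/2}$, which equals $\sqrt D^{\,p}F_p(Z/\sqrt D)-2dD^{(p-1)/2}$ where $F_p(Z)=2T_p(Z/2)$ and $T_p$ is the Chebyshev polynomial of the first kind. *)

theory Defs
  imports "HOL-Computational_Algebra.Polynomial" "HOL-Computational_Algebra.Polynomial_Factorial"
begin

definition fpoly :: "nat \<Rightarrow> rat \<Rightarrow> rat \<Rightarrow> rat poly" where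
  "fpoly p d R =
     (let D = d^2 - R in
       (\<Sum>j\<le>(p - 1) div 2.
          monom ((-1)^j * (of_nat p / of_nat (p - j)) * of_nat ((p - j) choose j) * D^j) (p - 2*j))
       - [: 2 * d * D ^ ((p - 1) div 2) :])"

end

theory Submission
  imports Defs "HOL-Computational_Algebra.Fundamental_Theorem_Algebra"
begin

text \<open>
  Write p = 2h + 1, D = d^2 - R, s = sqrt R and put \<alpha> = D^h (d + s), \<beta> = D^h (d - s), so that
  \<alpha> \<beta> = D^p and \<alpha> + \<beta> = 2 d D^h. The coefficients of f_p are those of the Dickson polynomial,
  whence y^p f_p(y + D/y) = (y^p - \<alpha>) (y^p - \<beta>): the complex roots of f_p are the numbers y + D/y
  with y^p \<in> {\<alpha>, \<beta>}.

  Suppose f_p had a rational factor g of degree k with 0 < k < p, and let G(y) = y^k g(y + D/y).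
  Then G has a root y with y^p = \<alpha>, but y^p - \<alpha> does not divide G: otherwise the p roots of
  y^p = \<alpha> and the p roots D/y of y^p = \<beta> would all be roots of G, whose degree is only 2k.
  Hence the gcd of G and y^p - \<alpha> over \<rat>(s) is a proper factor of y^p - \<alpha>; the product of its
  roots lies in \<rat>(s) and, as p is prime, yields some \<gamma> \<in> \<rat>(s) with \<gamma>^p = \<alpha>.
  Conjugating, the norm of \<gamma> has p-th power \<alpha> \<beta> = D^p, so it equals D, and
  \<gamma> + D/\<gamma> = \<gamma> + \<gamma>' is a rational root of f_p.
\<close>

section \<open>Dickson polynomials\<close>

definition dickson_coeff :: "nat \<Rightarrow> nat \<Rightarrow> 'a::field_char_0" where
  "dickson_coeff n j = of_nat n / of_nat (n - j) * of_nat (n - j choose j)"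

lemma dickson_coeff_eq_0: "n < 2 * j \<Longrightarrow> dickson_coeff n j = 0"
  by (cases "n - j < j") (auto simp: dickson_coeff_def binomial_eq_0)

lemma dickson_coeff_0: "n \<noteq> 0 \<Longrightarrow> dickson_coeff n 0 = 1"
  by (simp add: dickson_coeff_def)

lemma dickson_coeff_rec:
  assumes "n \<noteq> 0"
  shows "(dickson_coeff (n + 2) (Suc j) :: 'a::field_char_0)
           = dickson_coeff (n + 1) (Suc j) + dickson_coeff n j"
proof (cases "j < n")
  case False
  then show ?thesis using assms by (auto simp: dickson_coeff_def binomial_eq_0)
next
  case True
  then obtain m where n: "n = m + j + 1" by (metis add.commute add_Suc less_imp_Suc_add plus_1_eq_Suc)
  define M J X :: 'a where "M = of_nat m" and "J = of_nat j" and "X = of_nat (m + 1 choose j)"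
  have nonzero: "M + 1 \<noteq> 0" "M + 2 \<noteq> 0" "J + 1 \<noteq> 0"
    using of_nat_neq_0[of m, where 'a='a] of_nat_neq_0[of "Suc m", where 'a='a]
      of_nat_neq_0[of j, where 'a='a]
    by (simp_all add: M_def J_def add_ac)
  have "(m + 2 choose Suc j) * (j + 1) = (m + 2) * (m + 1 choose j)"
    using Suc_times_binomial[of j "m + 1"] by (simp add: mult.commute)
  then have "of_nat (m + 2 choose Suc j) * (J + 1) = (M + 2) * X"
    unfolding M_def J_def X_def by (metis of_nat_mult of_nat_add of_nat_1 of_nat_numeral)
  then have C2: "of_nat (m + 2 choose Suc j) = (M + 2) * X / (J + 1)"
    using nonzero by (simp add: eq_divide_eq)
  have "of_nat (m + 1 choose Suc j) * (J + 1) = (M + 1 - J) * X"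
  proof (cases "j \<le> m + 1")
    case True
    have "(m + 1 choose Suc j) * (j + 1) = (m + 1 - j) * (m + 1 choose j)"
      using binomial_absorb_comp[of "m + 1" j] binomial_absorption[of j "m + 1"] by (simp add: mult.commute)
    then have "(of_nat ((m + 1 choose Suc j) * (j + 1)) :: 'a) = of_nat ((m + 1 - j) * (m + 1 choose j))"
      by (simp only:)
    then show ?thesis
      unfolding M_def J_def X_def by (simp only: of_nat_mult of_nat_add of_nat_1 of_nat_diff[OF True])
  qed (simp add: X_def binomial_eq_0)
  then have C1: "of_nat (m + 1 choose Suc j) = (M + 1 - J) * X / (J + 1)"
    using nonzero by (simp add: eq_divide_eq)
  have D: "dickson_coeff (n + 2) (Suc j) = (M + J + 3) / (M + 2) * of_nat (m + 2 choose Suc j)"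
    "dickson_coeff (n + 1) (Suc j) = (M + J + 2) / (M + 1) * of_nat (m + 1 choose Suc j)"
    "dickson_coeff n j = (M + J + 1) / (M + 1) * X"
    by (simp_all add: dickson_coeff_def n M_def J_def X_def algebra_simps del: binomial_Suc_Suc)
  have "dickson_coeff (n + 2) (Suc j) = (M + J + 3) * (M + 1) * X / ((M + 1) * (J + 1))"
    "dickson_coeff (n + 1) (Suc j) + dickson_coeff n j
       = (M + J + 2) * (M + 1 - J) * X / ((M + 1) * (J + 1)) + (M + J + 1) * X / (M + 1)"
    unfolding D C1 C2 using nonzero by (simp_all del: binomial_Suc_Suc)
  moreover have "(M + J + 3) * (M + 1) * X = (M + J + 2) * (M + 1 - J) * X + (M + J + 1) * X * (J + 1)"
    by (simp add: algebra_simps)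
  ultimately show ?thesis
    using nonzero by (simp add: add_divide_distrib)
qed

text \<open>For j \<ge> n the factor n / (n - j) is a division by zero, hence 0; in particular
  dickson 0 is 0 rather than 2, which is why the identity below requires n \<noteq> 0.\<close>

definition dickson :: "nat \<Rightarrow> 'a \<Rightarrow> 'a \<Rightarrow> 'a::field_char_0" where
  "dickson n a t = (\<Sum>j\<le>n. (-1)^j * dickson_coeff n j * a^j * t^(n - 2*j))"

lemma dickson_rec:
  assumes "n \<noteq> 0"
  shows "dickson (n + 2) a t = t * dickson (n + 1) a t - a * dickson n a t"
proof -
  define X where "X j = (-1)^j * dickson_coeff (n + 1) j * a^j * t^(n + 2 - 2*j)" for j
  define Y where "Y j = (-1)^j * dickson_coeff n j * a^Suc j * t^(n - 2*j)" for j
  have "t * ((-1)^j * dickson_coeff (n + 1) j * a^j * t^(n + 1 - 2*j)) = X j" for j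
    by (cases "2 * j \<le> n + 1") (auto simp: X_def dickson_coeff_eq_0 Suc_diff_le)
  then have "t * dickson (n + 1) a t = (\<Sum>j\<le>n + 1. X j)"
    unfolding dickson_def sum_distrib_left by (rule sum.cong[OF refl])
  also have "\<dots> = (\<Sum>j\<le>Suc (n + 1). X j)"
    by (simp add: X_def dickson_coeff_eq_0)
  also have "\<dots> = X 0 + (\<Sum>j\<le>n + 1. X (Suc j))"
    by (rule sum.atMost_Suc_shift)
  finally have tX: "t * dickson (n + 1) a t = X 0 + (\<Sum>j\<le>n + 1. X (Suc j))" .
  have aY: "a * dickson n a t = (\<Sum>j\<le>n + 1. Y j)"
    by (simp add: dickson_def Y_def sum_distrib_left dickson_coeff_eq_0 mult_ac)
  have "(-1)^Suc j * dickson_coeff (n + 2) (Suc j) * a^Suc j * t^(n + 2 - 2 * Suc j) = X (Suc j) - Y j"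
    for j unfolding dickson_coeff_rec[OF assms] by (simp add: X_def Y_def algebra_simps)
  moreover have "(-1)^0 * dickson_coeff (n + 2) 0 * a^0 * t^(n + 2 - 2 * 0) = X 0"
    by (simp add: X_def dickson_coeff_0)
  moreover have "{..n + 2} = {..Suc (n + 1)}"
    by simp
  ultimately have "dickson (n + 2) a t = X 0 + (\<Sum>j\<le>n + 1. X (Suc j) - Y j)"
    unfolding dickson_def by (simp only: sum.atMost_Suc_shift)
  then show ?thesis
    unfolding tX aY sum_subtractf by simp
qed

lemma dickson_add_divide:
  assumes "y \<noteq> 0" "n \<noteq> 0"
  shows "dickson n a (y + a / y) = y^n + (a / y)^n"
  using assms(2)
proof (induction n rule: less_induct)
  case (less n)
  show ?case
  proof (cases "n \<le> 2")
    case True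
    then consider "n = 1" | "n = 2"
      using less.prems by linarith
    then show ?thesis
      using assms(1) by cases (simp_all add: dickson_def dickson_coeff_def numeral_2_eq_2 field_simps)
  next
    case False
    define k where "k = n - 2"
    have n: "n = k + 2" and "k \<noteq> 0"
      using False by (simp_all add: k_def)
    let ?z = "a / y"
    have "dickson n a (y + ?z) = (y + ?z) * dickson (k + 1) a (y + ?z) - a * dickson k a (y + ?z)"
      unfolding n by (rule dickson_rec) fact
    also have "\<dots> = (y + ?z) * (y^(k + 1) + ?z^(k + 1)) - (y * ?z) * (y^k + ?z^k)"
    proof -
      have "dickson k a (y + ?z) = y^k + ?z^k" "dickson (k + 1) a (y + ?z) = y^(k + 1) + ?z^(k + 1)"
        using less.IH[of k] less.IH[of "k + 1"] \<open>k \<noteq> 0\<close> by (simp_all add: n)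
      moreover have "y * ?z = a"
        using assms(1) by simp
      ultimately show ?thesis
        by (simp only:)
    qed
    also have "\<dots> = y^n + ?z^n"
    proof -
      have "(u + v) * (u^(k + 1) + v^(k + 1)) - (u * v) * (u^k + v^k) = u^(k + 2) + v^(k + 2)"
        for u v :: 'a by (simp add: algebra_simps)
      then show ?thesis
        unfolding n .
    qed
    finally show ?thesis .
  qed
qed

lemma map_poly_of_rat_add:
  "(map_poly of_rat (p + q) :: 'a::field_char_0 poly) = map_poly of_rat p + map_poly of_rat q"
  by (rule poly_eqI) (simp add: coeff_map_poly of_rat_add)

lemma map_poly_of_rat_diff:
  "(map_poly of_rat (p - q) :: 'a::field_char_0 poly) = map_poly of_rat p - map_poly of_rat q"
  by (rule poly_eqI) (simp add: coeff_map_poly of_rat_diff)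

lemma map_poly_of_rat_mult:
  "(map_poly of_rat (p * q) :: 'a::field_char_0 poly) = map_poly of_rat p * map_poly of_rat q"
  by (rule poly_eqI) (simp add: coeff_map_poly coeff_mult of_rat_sum of_rat_mult)

lemma map_poly_of_rat_sum:
  "(map_poly of_rat (\<Sum>i\<in>A. f i) :: 'a::field_char_0 poly) = (\<Sum>i\<in>A. map_poly of_rat (f i))"
  by (induction A rule: infinite_finite_induct) (auto simp: map_poly_of_rat_add)

lemma poly_map_poly_of_rat:
  "poly (map_poly of_rat p) (of_rat x) = (of_rat (poly p x) :: 'a::field_char_0)"
  by (simp add: poly_altdef coeff_map_poly of_rat_sum of_rat_mult of_rat_power degree_map_poly)

lemma poly_fpoly_eq_dickson:
  fixes z :: "'a::field_char_0"
  assumes "odd p"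
  shows "poly (map_poly of_rat (fpoly p d R)) z
           = dickson p (of_rat (d^2 - R)) z - of_rat (2 * d * (d^2 - R) ^ ((p - 1) div 2))"
proof -
  define h where "h = (p - 1) div 2"
  define a :: 'a where "a = of_rat (d^2 - R)"
  have "poly (map_poly of_rat (fpoly p d R)) z
     = (\<Sum>j\<le>h. (-1)^j * dickson_coeff p j * a^j * z^(p - 2*j)) - of_rat (2 * d * (d^2 - R)^h)"
    unfolding fpoly_def Let_def h_def[symmetric]
    by (simp add: map_poly_of_rat_diff map_poly_of_rat_sum map_poly_monom map_poly_pCons poly_sum
                  poly_monom dickson_coeff_def a_def of_rat_mult of_rat_divide of_rat_power mult.assoc)
  also have "(\<Sum>j\<le>h. (-1)^j * dickson_coeff p j * a^j * z^(p - 2*j)) = dickson p a z"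
    unfolding dickson_def
  proof (rule sum.mono_neutral_left)
    show "\<forall>j\<in>{..p} - {..h}. (-1)^j * dickson_coeff p j * a^j * z^(p - 2*j) = 0"
      using assms by (auto simp: h_def dickson_coeff_eq_0 elim!: oddE)
  qed (auto simp: h_def)
  finally show ?thesis
    by (simp add: a_def h_def)
qed

lemma degree_fpoly_le: "degree (fpoly p d R) \<le> p"
  unfolding fpoly_def Let_def
proof (rule order.trans[OF degree_diff_le], intro max.boundedI degree_sum_le)
  show "degree (monom c (p - 2 * j)) \<le> p" for c :: rat and j
    by (rule order.trans[OF degree_monom_le]) simp
qed auto

lemma irreducible_field_polyI:
  fixes f :: "'a::field poly"
  assumes "degree f \<noteq> 0"
    and "\<And>g. g dvd f \<Longrightarrow> degree g \<noteq> 0 \<Longrightarrow> degree g < degree f \<Longrightarrow> False"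
  shows "irreducible f"
proof (rule irreducibleI)
  show "f \<noteq> 0"
    using assms(1) by auto
  then show "\<not> is_unit f"
    using assms(1) by (simp add: is_unit_iff_degree)
  fix a b
  assume ab: "f = a * b"
  with \<open>f \<noteq> 0\<close> have "a \<noteq> 0" "b \<noteq> 0" "degree f = degree a + degree b"
    by (auto simp: degree_mult_eq)
  then show "is_unit a \<or> is_unit b"
    using assms(2)[of a] ab by (auto simp: is_unit_iff_degree)
qed

lemma degree_binomial:
  fixes c :: "'a::comm_ring_1"
  assumes "n \<noteq> 0"
  shows "degree (monom 1 n - [:c:]) = n"
proof -
  have "degree (monom 1 n + - [:c:]) = n"
    using assms by (subst degree_add_eq_left) (simp_all add: degree_monom_eq)
  then show ?thesis
    by (simp only: diff_conv_add_uminus)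
qed

lemma degree_common_factor_bounds:
  fixes X G r :: "'a::field poly"
  assumes "r dvd X" "r dvd G" "X \<noteq> 0" "\<not> X dvd G" "poly r y = 0"
  shows "degree r \<noteq> 0" "degree r < degree X"
proof -
  have "r \<noteq> 0"
    using assms(1,3) by auto
  show "degree r \<noteq> 0"
  proof
    assume "degree r = 0"
    then obtain c where "r = [:c:]"
      by (rule degree_eq_zeroE)
    with \<open>r \<noteq> 0\<close> assms(5) show False
      by simp
  qed
  show "degree r < degree X"
  proof (rule ccontr)
    assume "\<not> degree r < degree X"
    with dvd_imp_degree_le[OF assms(1,3)] have "degree r = degree X"
      by simp
    obtain k where k: "X = r * k"
      using assms(1) by blast
    with assms(3) \<open>degree r = degree X\<close> \<open>r \<noteq> 0\<close> have "degree k = 0"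
      by (simp add: degree_mult_eq)
    then obtain c where c: "k = [:c:]"
      by (rule degree_eq_zeroE)
    with k assms(3) have "c \<noteq> 0"
      by auto
    then have "r = X * [:inverse c:]"
      by (simp add: k c)
    then have "X dvd r"
      by (rule dvdI)
    with assms(2,4) show False
      using dvd_trans by blast
  qed
qed

definition poly_over :: "'a set \<Rightarrow> 'a::zero poly \<Rightarrow> bool" where
  "poly_over K p \<longleftrightarrow> (\<forall>i. coeff p i \<in> K)"

locale subfield =
  fixes K :: "'a::field set"
  assumes zero_mem [simp]: "0 \<in> K" and one_mem [simp]: "1 \<in> K"
    and add_mem [simp]: "x \<in> K \<Longrightarrow> y \<in> K \<Longrightarrow> x + y \<in> K"
    and uminus_mem [simp]: "x \<in> K \<Longrightarrow> - x \<in> K"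
    and mult_mem [simp]: "x \<in> K \<Longrightarrow> y \<in> K \<Longrightarrow> x * y \<in> K"
    and inverse_mem [simp]: "x \<in> K \<Longrightarrow> inverse x \<in> K"
begin

lemma diff_mem [simp]: "x \<in> K \<Longrightarrow> y \<in> K \<Longrightarrow> x - y \<in> K"
  using add_mem[of x "- y"] by simp

lemma divide_mem [simp]: "x \<in> K \<Longrightarrow> y \<in> K \<Longrightarrow> x / y \<in> K"
  by (simp add: divide_inverse)

lemma power_mem [simp]: "x \<in> K \<Longrightarrow> x ^ n \<in> K"
  by (induction n) auto

lemma sum_mem: "(\<And>i. i \<in> A \<Longrightarrow> f i \<in> K) \<Longrightarrow> sum f A \<in> K"
  by (induction A rule: infinite_finite_induct) auto

lemma poly_over_add [simp]: "poly_over K P \<Longrightarrow> poly_over K Q \<Longrightarrow> poly_over K (P + Q)"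
  by (simp add: poly_over_def)

lemma poly_over_diff [simp]: "poly_over K P \<Longrightarrow> poly_over K Q \<Longrightarrow> poly_over K (P - Q)"
  by (simp add: poly_over_def)

lemma poly_over_mult [simp]: "poly_over K P \<Longrightarrow> poly_over K Q \<Longrightarrow> poly_over K (P * Q)"
  unfolding poly_over_def coeff_mult by (auto intro!: sum_mem)

lemma poly_over_smult [simp]: "c \<in> K \<Longrightarrow> poly_over K P \<Longrightarrow> poly_over K (smult c P)"
  by (simp add: poly_over_def)

lemma poly_over_pCons [simp]: "poly_over K (pCons c P) \<longleftrightarrow> c \<in> K \<and> poly_over K P"
  unfolding poly_over_def by (auto simp: coeff_pCons split: nat.splits)

lemma poly_over_0 [simp]: "poly_over K 0"
  by (simp add: poly_over_def)

lemma poly_over_1 [simp]: "poly_over K 1"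
  by (simp add: poly_over_def)

lemma poly_over_monom [simp]: "c \<in> K \<Longrightarrow> poly_over K (monom c n)"
  by (simp add: poly_over_def)

lemma poly_over_power [simp]: "poly_over K P \<Longrightarrow> poly_over K (P ^ n)"
  by (induction n) auto

lemma poly_over_sum: "(\<And>i. i \<in> A \<Longrightarrow> poly_over K (f i)) \<Longrightarrow> poly_over K (sum f A)"
  by (induction A rule: infinite_finite_induct) auto

lemma poly_over_div_mod:
  assumes "Q \<noteq> 0" "poly_over K Q" "poly_over K P"
  shows "\<exists>m r. poly_over K m \<and> poly_over K r \<and> P = m * Q + r \<and> (r = 0 \<or> degree r < degree Q)"
  using assms(3)
proof (induction P rule: pCons_induct)
  case 0
  show ?case
    by (intro exI[of _ 0]) auto
next
  case (pCons a P)
  then obtain m r where mr: "poly_over K m" "poly_over K r" "P = m * Q + r"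
      "r = 0 \<or> degree r < degree Q"
    by auto
  define T where "T = pCons a r"
  define c where "c = coeff T (degree Q) / lead_coeff Q"
  define r' where "r' = T - smult c Q"
  have T: "poly_over K T" "degree T \<le> degree Q"
    using pCons.prems mr(2,4) by (auto simp: T_def)
  then have c: "c \<in> K"
    using assms(2) by (simp add: c_def poly_over_def)
  have "coeff r' (degree Q) = 0" "degree r' \<le> degree Q"
    using assms(1) T(2) by (auto simp: r'_def c_def intro: order.trans[OF degree_diff_le])
  then have "r' = 0 \<or> degree r' < degree Q"
    by (metis leading_coeff_0_iff le_neq_implies_less)
  moreover have "pCons a P = (pCons 0 m + [:c:]) * Q + r'"
    by (simp add: mr(3) r'_def T_def algebra_simps)
  moreover have "poly_over K (pCons 0 m + [:c:])" "poly_over K r'"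
    using mr(1) c T(1) assms(2) by (simp_all add: r'_def)
  ultimately show ?case
    by blast
qed

lemma poly_over_bezout:
  "poly_over K P \<Longrightarrow> poly_over K Q \<Longrightarrow>
     \<exists>r u v. poly_over K r \<and> r dvd P \<and> r dvd Q \<and> r = u * P + v * Q"
proof (induction "if Q = 0 then 0 else Suc (degree Q)" arbitrary: P Q rule: less_induct)
  case less
  show ?case
  proof (cases "Q = 0")
    case True
    then show ?thesis
      using less.prems by (intro exI[of _ P] exI[of _ 1] exI[of _ 0]) auto
  next
    case False
    obtain m r where mr: "poly_over K m" "poly_over K r" "P = m * Q + r"
        "r = 0 \<or> degree r < degree Q"
      using poly_over_div_mod[OF False less.prems(2,1)] by blast
    then have "(if r = 0 then 0 else Suc (degree r)) < (if Q = 0 then 0 else Suc (degree Q))"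
      using False by auto
    from less.hyps[OF this less.prems(2) mr(2)] obtain g u v
      where g: "poly_over K g" "g dvd Q" "g dvd r" "g = u * Q + v * r"
      by blast
    have "g dvd P"
      using g by (simp add: mr(3))
    moreover have "g = v * P + (u - v * m) * Q"
      by (simp add: g(4) mr(3) algebra_simps)
    ultimately show ?thesis
      using g by blast
  qed
qed

end

section \<open>Substituting y + c/y\<close>

definition joukowski_lift :: "'a \<Rightarrow> 'a::field poly \<Rightarrow> 'a poly" where
  "joukowski_lift c g = (\<Sum>i\<le>degree g. smult (coeff g i) (monom 1 (degree g - i) * [:c, 0, 1:] ^ i))"

lemma poly_joukowski_lift:
  assumes "y \<noteq> 0"
  shows "poly (joukowski_lift c g) y = y ^ degree g * poly g (y + c / y)"
proof -
  have "y ^ (degree g - i) * (c + y * y) ^ i = y ^ degree g * (y + c / y) ^ i"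
    if "i \<le> degree g" for i
  proof -
    have "c + y * y = y * (y + c / y)"
      using assms by (simp add: field_simps)
    then show ?thesis
      using that by (simp add: power_mult_distrib mult.assoc[symmetric] power_add[symmetric])
  qed
  then show ?thesis
    unfolding joukowski_lift_def poly_altdef[of g]
    by (simp add: poly_sum poly_monom sum_distrib_left algebra_simps)
qed

lemma degree_joukowski_lift: "degree (joukowski_lift c g) \<le> 2 * degree g"
  unfolding joukowski_lift_def
proof (intro degree_sum_le)
  fix i
  assume "i \<in> {..degree g}"
  have "degree (smult (coeff g i) (monom 1 (degree g - i) * [:c, 0, 1:] ^ i))
          \<le> (degree g - i) + 2 * i"
    by (intro order.trans[OF degree_smult_le] order.trans[OF degree_mult_le] add_mono
        order.trans[OF degree_power_le]) (simp_all add: degree_monom_le)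
  with \<open>i \<in> {..degree g}\<close> show "degree (smult (coeff g i) (monom 1 (degree g - i) * [:c, 0, 1:] ^ i))
          \<le> 2 * degree g"
    by simp
qed simp

lemma (in subfield) poly_over_joukowski_lift:
  assumes "c \<in> K" "poly_over K g"
  shows "poly_over K (joukowski_lift c g)"
  using assms unfolding joukowski_lift_def poly_over_def[of K g]
  by (intro poly_over_sum poly_over_smult poly_over_mult poly_over_power) simp_all

lemma complex_add_divide_surj:
  fixes c t :: complex
  assumes "c \<noteq> 0"
  obtains y where "y \<noteq> 0" "y + c / y = t"
proof -
  obtain w where w: "w * w = t * t - 4 * c"
    using power2_csqrt[of "t * t - 4 * c"] by (metis power2_eq_square)
  define y where "y = (t + w) / 2"
  have "y * y - t * y + c = 0"
    by (simp add: y_def field_simps) (use w in algebra)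
  moreover from this have "y \<noteq> 0"
    using assms by auto
  ultimately show ?thesis
    by (intro that[of y]) (simp_all add: field_simps)
qed

lemma joukowski_lift_nonzero:
  fixes c :: complex
  assumes "c \<noteq> 0" "g \<noteq> 0"
  shows "joukowski_lift c g \<noteq> 0"
proof
  assume lift: "joukowski_lift c g = 0"
  have "poly g t = 0" for t
  proof -
    obtain y where "y \<noteq> 0" "y + c / y = t"
      using complex_add_divide_surj[OF assms(1)] .
    then show ?thesis
      using poly_joukowski_lift[of y c g] lift by simp
  qed
  then show False
    using assms(2) poly_all_0_iff_0 by blast
qed

lemma joukowski_lift_root_swap:
  assumes "y \<noteq> 0" "c \<noteq> 0" "poly (joukowski_lift c g) y = 0"
  shows "poly (joukowski_lift c g) (c / y) = 0"
proof -
  have "poly (joukowski_lift c g) (c / y) = (c / y) ^ degree g * poly g (c / y + c / (c / y))"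
    using assms by (intro poly_joukowski_lift) simp
  also have "c / y + c / (c / y) = y + c / y"
    using assms by simp
  also have "poly g (y + c / y) = 0"
    using assms poly_joukowski_lift[of y c g] by simp
  finally show ?thesis
    by simp
qed

section \<open>Factors of y^p - c\<close>

lemma (in subfield) pth_root_if_coprime_power:
  assumes "c \<in> K" "c \<noteq> 0" "w \<in> K" "w ^ p = c ^ m" "coprime m p" "m \<noteq> 0"
  shows "\<exists>\<gamma>\<in>K. \<gamma> ^ p = c"
proof -
  obtain x y where xy: "m * x = p * y + 1"
    using bezout_nat[of m p] assms(5,6) by (auto simp: coprime_iff_gcd_eq_1)
  have "(w ^ x / c ^ y) ^ p = (w ^ p) ^ x / (c ^ p) ^ y"
    by (simp add: power_divide power_mult[symmetric] mult.commute)
  also have "\<dots> = c ^ (m * x) / c ^ (p * y)"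
    by (simp add: assms(4) power_mult)
  also have "\<dots> = c"
    using assms(2) by (simp add: xy)
  finally show ?thesis
    using assms(1,3) by (intro bexI[of _ "w ^ x / c ^ y"]) simp_all
qed

lemma prod_roots_of_factor_of_binomial:
  fixes K :: "complex set" and c :: complex
  assumes "subfield K" "poly_over K r" "r dvd monom 1 p - [:c:]" "r \<noteq> 0"
  shows "\<exists>w\<in>K. w ^ p = c ^ degree r"
proof -
  interpret subfield K by fact
  define m where "m = degree r"
  obtain root where root: "smult (lead_coeff r) (\<Prod>i<m. [:- root i, 1:]) = r"
    unfolding m_def using complex_poly_decompose' by blast
  have poly_r: "poly r x = lead_coeff r * (\<Prod>i<m. x - root i)" for x
    by (subst root[symmetric]) (simp add: poly_prod)
  have root_power: "root i ^ p = c" if "i < m" for i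
  proof -
    have "poly r (root i) = 0"
      unfolding poly_r using that by (auto intro: prod_zero)
    moreover obtain k where "monom 1 p - [:c:] = r * k"
      using assms(3) by blast
    ultimately have "poly (monom 1 p - [:c:]) (root i) = 0"
      by simp
    then show ?thesis
      by (simp add: poly_monom)
  qed
  define w where "w = (\<Prod>i<m. root i)"
  have "w ^ p = (\<Prod>i<m. root i ^ p)"
    by (simp add: w_def prod_power_distrib)
  also have "\<dots> = c ^ m"
    by (simp add: root_power)
  finally have "w ^ p = c ^ m" .
  moreover have "coeff r 0 = lead_coeff r * (-1) ^ m * w"
    by (simp add: poly_0_coeff_0[symmetric] poly_r w_def prod_uminus)
  then have "w = coeff r 0 / (lead_coeff r * (-1) ^ m)"
    using assms(4) by (simp add: field_simps)
  then have "w \<in> K"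
    using assms(2) by (simp add: poly_over_def)
  ultimately show ?thesis
    by (auto simp: m_def)
qed

lemma pth_root_if_factor_of_binomial:
  fixes K :: "complex set" and c :: complex
  assumes "subfield K" and "prime p" and "c \<in> K"
    and "poly_over K r" and "r dvd monom 1 p - [:c:]" and "degree r \<noteq> 0" and "degree r < p"
  shows "\<exists>\<gamma>\<in>K. \<gamma> ^ p = c"
proof (cases "c = 0")
  case True
  then show ?thesis
    using subfield.zero_mem[OF assms(1)] prime_gt_0_nat[OF assms(2)] by (auto intro: bexI[of _ 0])
next
  case False
  have "r \<noteq> 0"
    using assms(6) by auto
  then obtain w where "w \<in> K" "w ^ p = c ^ degree r"
    using prod_roots_of_factor_of_binomial[OF assms(1,4,5)] by blast
  moreover have "\<not> p dvd degree r"
    using assms(6,7) by (auto dest: dvd_imp_le)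
  then have "coprime (degree r) p"
    using prime_imp_coprime[OF assms(2)] coprime_commute by blast
  ultimately show ?thesis
    using subfield.pth_root_if_coprime_power[OF assms(1,3) False] assms(6) by blast
qed

section \<open>The quadratic field \<rat>(s)\<close>

definition rat_adjoin :: "'a::field_char_0 \<Rightarrow> 'a set" where
  "rat_adjoin s = {of_rat a + of_rat b * s | a b. True}"

lemma rat_pair_power:
  "\<exists>u v. \<forall>t::'a::field_char_0. t * t = of_rat R \<longrightarrow>
     (of_rat a + of_rat b * t) ^ n = of_rat u + of_rat v * t"
proof (induction n)
  case 0
  show ?case
    by (intro exI[of _ 1] exI[of _ 0]) simp
next
  case (Suc n)
  then obtain u v where uv: "\<forall>t::'a. t * t = of_rat R \<longrightarrow>
      (of_rat a + of_rat b * t) ^ n = of_rat u + of_rat v * t"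
    by blast
  have "(of_rat a + of_rat b * t) ^ Suc n
          = of_rat (a * u + R * b * v) + of_rat (a * v + b * u) * t"
    if "t * t = of_rat R" for t :: 'a
    using uv that by (simp add: of_rat_add of_rat_mult algebra_simps)
  then show ?case
    by blast
qed

locale quadratic_extension =
  fixes s :: "'a::field_char_0" and R :: rat
  assumes s_square: "s * s = of_rat R"
    and R_not_square: "\<not> (\<exists>r. R = r ^ 2)"
begin

lemma of_rat_mem_rat_adjoin [simp]: "of_rat x \<in> rat_adjoin s"
  unfolding rat_adjoin_def by (intro CollectI exI[of _ x] exI[of _ 0]) simp

lemma s_mem_rat_adjoin [simp]: "s \<in> rat_adjoin s"
  unfolding rat_adjoin_def by (intro CollectI exI[of _ 0] exI[of _ 1]) simp

lemma s_not_rat: "s \<noteq> of_rat q"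
proof
  assume "s = of_rat q"
  then have "of_rat R = (of_rat (q^2) :: 'a)"
    using s_square by (simp add: of_rat_mult power2_eq_square)
  then show False
    using R_not_square by (simp only: of_rat_eq_iff) blast
qed

lemma rat_adjoin_coords_unique:
  assumes "of_rat a + of_rat b * s = of_rat a' + of_rat b' * s"
  shows "a = a' \<and> b = b'"
proof (cases "b = b'")
  case False
  then have "s = of_rat ((a - a') / (b' - b))"
    using assms by (simp add: of_rat_divide of_rat_diff field_simps)
  then show ?thesis
    using s_not_rat by blast
qed (use assms in simp)

lemma mult_conj: "(of_rat a + of_rat b * s) * (of_rat a - of_rat b * s) = of_rat (a^2 - R * b^2)"
  using s_square by (simp add: of_rat_diff of_rat_mult power2_eq_square algebra_simps)

lemma norm_nonzero:
  assumes "a \<noteq> 0 \<or> b \<noteq> 0"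
  shows "a^2 - R * b^2 \<noteq> 0"
proof
  assume norm: "a^2 - R * b^2 = 0"
  with assms have "b \<noteq> 0"
    by auto
  with norm have "R = (a / b)^2"
    by (simp add: field_simps power2_eq_square)
  then show False
    using R_not_square by blast
qed

sublocale subfield "rat_adjoin s"
proof
  fix x y
  assume "x \<in> rat_adjoin s" "y \<in> rat_adjoin s"
  then obtain a b a' b' where xy: "x = of_rat a + of_rat b * s" "y = of_rat a' + of_rat b' * s"
    unfolding rat_adjoin_def by blast
  have "x + y = of_rat (a + a') + of_rat (b + b') * s"
    by (simp add: xy of_rat_add algebra_simps)
  then show "x + y \<in> rat_adjoin s"
    unfolding rat_adjoin_def by blast
  have "x * y = of_rat (a * a' + R * b * b') + of_rat (a * b' + b * a') * s"
    using s_square by (simp add: xy of_rat_add of_rat_mult algebra_simps)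
  then show "x * y \<in> rat_adjoin s"
    unfolding rat_adjoin_def by blast
next
  fix x
  assume "x \<in> rat_adjoin s"
  then obtain a b where x: "x = of_rat a + of_rat b * s"
    unfolding rat_adjoin_def by blast
  have "- x = of_rat (- a) + of_rat (- b) * s"
    by (simp add: x of_rat_minus)
  then show "- x \<in> rat_adjoin s"
    unfolding rat_adjoin_def by blast
  show "inverse x \<in> rat_adjoin s"
  proof (cases "a = 0 \<and> b = 0")
    case False
    define N where "N = a^2 - R * b^2"
    have "N \<noteq> 0"
      using norm_nonzero False by (simp add: N_def)
    then have "inverse x = (of_rat a - of_rat b * s) / of_rat N"
      using mult_conj[of a b] by (intro inverse_unique) (simp add: x N_def)
    also have "\<dots> = of_rat (a / N) + of_rat (- b / N) * s"
      by (simp add: of_rat_divide of_rat_minus diff_divide_distrib)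
    finally show ?thesis
      unfolding rat_adjoin_def by blast
  qed (use of_rat_mem_rat_adjoin[of 0] in \<open>simp add: x\<close>)
qed (use of_rat_mem_rat_adjoin[of 0] of_rat_mem_rat_adjoin[of 1] in simp_all)

lemma conj_power:
  assumes "(of_rat a + of_rat b * s) ^ n = of_rat u + of_rat v * s"
  shows "(of_rat a - of_rat b * s) ^ n = of_rat u - of_rat v * s"
proof -
  obtain u' v' where uv: "\<forall>t::'a. t * t = of_rat R \<longrightarrow>
      (of_rat a + of_rat b * t) ^ n = of_rat u' + of_rat v' * t"
    using rat_pair_power by blast
  then have "u' = u \<and> v' = v"
    using assms s_square by (intro rat_adjoin_coords_unique) auto
  then show ?thesis
    using uv[rule_format, of "- s"] s_square by simp
qed

end

lemma odd_power_inj: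
  fixes x y :: "'a::linordered_idom"
  assumes "odd n" "x ^ n = y ^ n"
  shows "x = y"
proof -
  have "0 < n"
    using assms(1) by (simp add: odd_pos)
  have "0 \<le> x \<longleftrightarrow> 0 \<le> y"
    using assms by (metis zero_le_odd_power)
  then consider "0 \<le> x" "0 \<le> y" | "0 \<le> - x" "0 \<le> - y"
    by linarith
  then show ?thesis
  proof cases
    case 1
    then show ?thesis using assms(2) power_eq_iff_eq_base[OF \<open>0 < n\<close>] by blast
  next
    case 2
    then have "- x = - y"
      using assms power_eq_iff_eq_base[OF \<open>0 < n\<close>, of "- x" "- y"] by simp
    then show ?thesis
      by simp
  qed
qed

locale fpoly_setting = quadratic_extension s R for s :: complex and R +
  fixes d :: rat and p :: nat
  assumes prime_p: "prime p" and p_ge_3: "p \<ge> 3"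
begin

definition "D = d^2 - R"
definition "h = (p - 1) div 2"
definition "\<alpha> = of_rat (D ^ h) * (of_rat d + s)"
definition "\<beta> = of_rat (D ^ h) * (of_rat d - s)"

lemma p_odd: "odd p"
  using prime_odd_nat[OF prime_p] p_ge_3 by simp

lemma p_eq: "2 * h + 1 = p"
  using p_odd by (auto simp: h_def elim!: oddE)

lemma D_nonzero: "D \<noteq> 0"
  using R_not_square by (auto simp: D_def)

lemma alpha_mult_beta: "\<alpha> * \<beta> = of_rat D ^ p"
proof -
  have "\<alpha> * \<beta> = of_rat (D ^ h) * of_rat (D ^ h) * (of_rat d * of_rat d - s * s)"
    by (simp add: \<alpha>_def \<beta>_def algebra_simps)
  also have "of_rat d * of_rat d - s * s = (of_rat D :: complex)"
    by (simp add: D_def s_square of_rat_diff of_rat_mult power2_eq_square)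
  also have "of_rat (D ^ h) * of_rat (D ^ h) * of_rat D = (of_rat D ^ (2 * h + 1) :: complex)"
    by (simp add: of_rat_power power_add mult_2)
  finally show ?thesis
    by (simp only: p_eq)
qed

lemma alpha_add_beta: "\<alpha> + \<beta> = of_rat (2 * d * D ^ h)"
  by (simp add: \<alpha>_def \<beta>_def of_rat_mult of_rat_power algebra_simps)

lemma alpha_nonzero: "\<alpha> \<noteq> 0" and beta_nonzero: "\<beta> \<noteq> 0"
  using alpha_mult_beta D_nonzero by auto

lemma alpha_neq_beta: "\<alpha> \<noteq> \<beta>"
  using s_not_rat[of 0] D_nonzero by (simp add: \<alpha>_def \<beta>_def algebra_simps)

lemma alpha_mem: "\<alpha> \<in> rat_adjoin s"
  by (simp add: \<alpha>_def)

lemma poly_fpoly_add_divide: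
  assumes "y \<noteq> 0"
  shows "poly (map_poly of_rat (fpoly p d R)) (y + of_rat D / y) = y ^ p + (of_rat D / y) ^ p - (\<alpha> + \<beta>)"
  using dickson_add_divide[OF assms, of p] p_ge_3
  by (simp add: poly_fpoly_eq_dickson[OF p_odd] alpha_add_beta D_def h_def)

lemma fpoly_root_iff:
  assumes "y \<noteq> 0"
  shows "poly (map_poly of_rat (fpoly p d R)) (y + of_rat D / y) = 0 \<longleftrightarrow> y ^ p = \<alpha> \<or> y ^ p = \<beta>"
proof -
  have "y ^ p * poly (map_poly of_rat (fpoly p d R)) (y + of_rat D / y) = (y ^ p - \<alpha>) * (y ^ p - \<beta>)"
    using alpha_mult_beta assms by (simp add: poly_fpoly_add_divide power_divide algebra_simps)
  moreover have "y ^ p \<noteq> 0"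
    using assms by simp
  ultimately show ?thesis
    by (metis mult_eq_0_iff right_minus_eq)
qed

lemma power_D_divide:
  assumes "y \<noteq> 0"
  shows "(of_rat D / y) ^ p = \<alpha> * \<beta> / y ^ p"
  by (simp add: alpha_mult_beta power_divide)

lemma fpoly_rat_root_if_pth_root:
  assumes "\<gamma> \<in> rat_adjoin s" "\<gamma> ^ p = \<alpha>"
  shows "\<exists>z. poly (fpoly p d R) z = 0"
proof -
  obtain a b where \<gamma>: "\<gamma> = of_rat a + of_rat b * s"
    using assms(1) by (auto simp: rat_adjoin_def)
  define \<gamma>' where "\<gamma>' = of_rat a - of_rat b * s"
  have "\<gamma>' ^ p = \<beta>"
    using conj_power[of a b p "D ^ h * d" "D ^ h"] assms(2)
    by (simp add: \<gamma> \<gamma>'_def \<alpha>_def \<beta>_def of_rat_mult algebra_simps)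
  have "\<gamma> \<noteq> 0"
    using assms(2) alpha_nonzero prime_gt_0_nat[OF prime_p] by (auto simp: power_0_left)
  \<comment> \<open>The norm of \<gamma> is rational with p-th power D^p, so it is D since p is odd;
     hence D / \<gamma> is the conjugate of \<gamma> and \<gamma> + D / \<gamma> is rational.\<close>
  have "of_rat ((a^2 - R * b^2) ^ p) = (\<gamma> * \<gamma>') ^ p"
    using mult_conj[of a b] by (simp add: \<gamma> \<gamma>'_def of_rat_power)
  also have "\<dots> = of_rat (D ^ p)"
    using alpha_mult_beta assms(2) \<open>\<gamma>' ^ p = \<beta>\<close> by (simp add: power_mult_distrib of_rat_power)
  finally have "of_rat ((a^2 - R * b^2) ^ p) = (of_rat (D ^ p) :: complex)" .
  then have "a^2 - R * b^2 = D"
    using odd_power_inj[of p] prime_odd_nat[OF prime_p] p_ge_3 by (simp only: of_rat_eq_iff) auto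
  then have "\<gamma> * \<gamma>' = of_rat D"
    using mult_conj[of a b] by (simp add: \<gamma> \<gamma>'_def)
  then have "\<gamma> + of_rat D / \<gamma> = \<gamma> + \<gamma>'"
    using \<open>\<gamma> \<noteq> 0\<close> by (simp add: divide_eq_eq mult.commute)
  also have "\<dots> = of_rat (2 * a)"
    by (simp add: \<gamma> \<gamma>'_def of_rat_mult)
  finally have "\<gamma> + of_rat D / \<gamma> = of_rat (2 * a)" .
  moreover have "poly (map_poly of_rat (fpoly p d R)) (\<gamma> + of_rat D / \<gamma>) = 0"
    using fpoly_root_iff[OF \<open>\<gamma> \<noteq> 0\<close>] assms(2) by simp
  ultimately have "poly (fpoly p d R) (2 * a) = 0"
    using poly_map_poly_of_rat[where 'a=complex, of "fpoly p d R" "2 * a"] by simp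
  then show ?thesis ..
qed

lemma exists_pth_root_alpha: "\<exists>y. y ^ p = \<alpha>"
proof -
  have "\<not> constant (poly (monom 1 p - [:\<alpha>:]))"
    using p_ge_3 by (simp add: constant_degree degree_binomial)
  then obtain y where "poly (monom 1 p - [:\<alpha>:]) y = 0"
    using fundamental_theorem_of_algebra by blast
  then show ?thesis
    by (auto simp: poly_monom)
qed

lemma fpoly_complex_root: "\<exists>t::complex. poly (map_poly of_rat (fpoly p d R)) t = 0"
proof -
  obtain y where "y ^ p = \<alpha>"
    using exists_pth_root_alpha by blast
  moreover from this have "y \<noteq> 0"
    using alpha_nonzero p_ge_3 by (auto simp: power_0_left)
  ultimately have "poly (map_poly of_rat (fpoly p d R)) (y + of_rat D / y) = 0"
    using fpoly_root_iff by simp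
  then show ?thesis ..
qed

lemma joukowski_lift_root:
  assumes "g dvd map_poly of_rat (fpoly p d R)" "degree g \<noteq> 0"
  obtains y where "y ^ p = \<alpha>" "poly (joukowski_lift (of_rat D) g) y = 0"
proof -
  obtain t where "poly g t = 0"
    using fundamental_theorem_of_algebra assms(2) by (auto simp: constant_degree)
  moreover have "(of_rat D :: complex) \<noteq> 0"
    using D_nonzero by simp
  then obtain y where y: "y \<noteq> 0" "y + of_rat D / y = t"
    using complex_add_divide_surj by blast
  ultimately have root: "poly (joukowski_lift (of_rat D) g) y = 0"
    by (simp add: poly_joukowski_lift)
  obtain k where "map_poly of_rat (fpoly p d R) = g * k"
    using assms(1) by (rule dvdE)
  with \<open>poly g t = 0\<close> have "y ^ p = \<alpha> \<or> y ^ p = \<beta>"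
    using fpoly_root_iff[OF y(1)] y(2) by simp
  then show ?thesis
  proof
    assume "y ^ p = \<beta>"
    then have "(of_rat D / y) ^ p = \<alpha>"
      using power_D_divide[OF y(1)] beta_nonzero by simp
    moreover have "poly (joukowski_lift (of_rat D) g) (of_rat D / y) = 0"
      using joukowski_lift_root_swap[OF y(1) \<open>of_rat D \<noteq> 0\<close> root] .
    ultimately show ?thesis
      by (rule that)
  qed (use root that in blast)
qed

lemma binomial_not_dvd_joukowski_lift:
  assumes "g \<noteq> 0" "degree g < p"
  shows "\<not> monom 1 p - [:\<alpha>:] dvd joukowski_lift (of_rat D) g"
proof
  assume dvd: "monom 1 p - [:\<alpha>:] dvd joukowski_lift (of_rat D) g"
  define G where "G = joukowski_lift (of_rat D) g"
  define A where "A = {y. y ^ p = \<alpha>}"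
  define B where "B = (\<lambda>y. of_rat D / y) ` A"
  have "0 \<notin> A"
    using alpha_nonzero p_ge_3 by (auto simp: A_def power_0_left)
  have root_A: "poly G y = 0" if "y \<in> A" for y
    using dvd that by (auto simp: G_def A_def poly_monom)
  have root_B: "poly G y = 0" if "y \<in> B" for y
    using that root_A \<open>0 \<notin> A\<close> D_nonzero
    by (auto simp: B_def G_def intro!: joukowski_lift_root_swap)
  have "(of_rat D / y) ^ p = \<beta>" if "y \<in> A" for y
    using that power_D_divide[of y] alpha_nonzero \<open>0 \<notin> A\<close> by (auto simp: A_def)
  then have "A \<inter> B = {}"
    using alpha_neq_beta by (auto simp: A_def B_def)
  moreover have "card A = p" "finite A"
    using card_nth_roots[OF alpha_nonzero, of p] p_ge_3 by (auto simp: A_def intro: card_ge_0_finite)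
  moreover have "card B = p"
    unfolding B_def using \<open>card A = p\<close> \<open>0 \<notin> A\<close> D_nonzero
    by (subst card_image) (auto intro!: inj_onI simp: field_simps)
  ultimately have "card (A \<union> B) = 2 * p"
    by (simp add: B_def card_Un_disjoint)
  moreover have "G \<noteq> 0"
    using assms(1) D_nonzero by (simp add: G_def joukowski_lift_nonzero)
  then have "card (A \<union> B) \<le> degree G"
    using root_A root_B
    by (intro order.trans[OF card_mono card_poly_roots_bound]) (auto simp: poly_roots_finite)
  moreover have "degree G < 2 * p"
    using degree_joukowski_lift[of "of_rat D" g] assms(2) by (simp add: G_def)
  ultimately show False
    by simp
qed

lemma pth_root_if_factor:
  assumes "g dvd fpoly p d R" "degree g \<noteq> 0" "degree g < p"
  shows "\<exists>\<gamma>\<in>rat_adjoin s. \<gamma> ^ p = \<alpha>"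
proof -
  define g' where "g' = (map_poly of_rat g :: complex poly)"
  define G where "G = joukowski_lift (of_rat D) g'"
  define X where "X = monom 1 p - [:\<alpha>:]"
  have "degree g' = degree g"
    by (simp add: g'_def degree_map_poly)
  then have "degree g' \<noteq> 0" "degree g' < p"
    using assms(2,3) by simp_all
  have "poly_over (rat_adjoin s) G"
    unfolding G_def g'_def by (intro poly_over_joukowski_lift) (auto simp: poly_over_def coeff_map_poly)
  moreover have "poly_over (rat_adjoin s) X"
    by (simp add: X_def alpha_mem)
  ultimately obtain r u v where r: "poly_over (rat_adjoin s) r" "r dvd G" "r dvd X" "r = u * G + v * X"
    using poly_over_bezout by blast
  have "g' dvd map_poly of_rat (fpoly p d R)"
    using assms(1) by (auto simp: g'_def map_poly_of_rat_mult)
  then obtain y where "y ^ p = \<alpha>" "poly G y = 0"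
    using joukowski_lift_root \<open>degree g' \<noteq> 0\<close> unfolding G_def by blast
  then have "poly r y = 0"
    by (simp add: r(4) X_def poly_monom)
  have "degree X = p"
    using p_ge_3 by (simp add: X_def degree_binomial)
  then have "X \<noteq> 0"
    using p_ge_3 by auto
  have "g' \<noteq> 0"
    using \<open>degree g' \<noteq> 0\<close> by auto
  then have "\<not> X dvd G"
    using binomial_not_dvd_joukowski_lift \<open>degree g' < p\<close> by (simp add: G_def X_def)
  then have "degree r \<noteq> 0" "degree r < p"
    using degree_common_factor_bounds[OF r(3,2) \<open>X \<noteq> 0\<close> _ \<open>poly r y = 0\<close>] \<open>degree X = p\<close>
    by auto
  then show ?thesis
    using pth_root_if_factor_of_binomial[OF subfield_axioms prime_p alpha_mem r(1)] r(3)
    unfolding X_def by blast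
qed

lemma degree_fpoly_nonzero:
  assumes "fpoly p d R \<noteq> 0"
  shows "degree (fpoly p d R) \<noteq> 0"
proof
  assume "degree (fpoly p d R) = 0"
  then obtain c where c: "fpoly p d R = [:c:]"
    by (rule degree_eq_zeroE)
  from fpoly_complex_root have "c = 0"
    by (auto simp: c map_poly_pCons)
  with c assms show False
    by simp
qed
end

theorem theorem4:
  fixes p :: nat and d R :: rat
  assumes "prime p" and "p \<ge> 3"
    and "d \<noteq> 0"
    and "\<not> (\<exists>r::rat. R = r^2)"
    and "\<forall>z::rat. poly (fpoly p d R) z \<noteq> 0"
  shows "irreducible (fpoly p d R)"
proof -
  interpret fpoly_setting "csqrt (of_rat R)" R d p
    using assms(1,2,4) by unfold_locales (simp_all flip: power2_eq_square)
  have "fpoly p d R \<noteq> 0"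
    using assms(5) by auto
  then show ?thesis
  proof (intro irreducible_field_polyI degree_fpoly_nonzero)
    fix g
    assume "g dvd fpoly p d R" "degree g \<noteq> 0" "degree g < degree (fpoly p d R)"
    moreover from this have "degree g < p"
      using degree_fpoly_le order.strict_trans2 by blast
    ultimately obtain \<gamma> where "\<gamma> \<in> rat_adjoin (csqrt (of_rat R))" "\<gamma> ^ p = \<alpha>"
      using pth_root_if_factor by blast
    then show False
      using fpoly_rat_root_if_pth_root assms(5) by blast
  qed
qed

end
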